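(* Let $R$ be a commutative unital ring such that every proper quotient of $R/\operatorname{Jac}(R)$ has Bass stable rank $1$, where $\operatorname{Jac}(R)$ denotes the Jacobson radical of $R$ (the intersection of all maximal ideals of $R$). Then $\operatorname{sr}(R) \le 2$.
   Context: Rings are commutative and unital. A row $(r_1,\dots,r_n)\in R^n$ is unimodular if $\sum_i R r_i = R$; $\operatorname{Um}_n(R)$ denotes the set of unimodular rows of size $n$. A row $(r_1,\dots,r_{n+1})\in\operatorname{Um}_{n+1}(R)$ ($n>0$) is stable if there are $s_1,\dots,s_n\in R$ with $(r_1+s_1r_{n+1},\dots,r_n+s_nr_{n+1})\in\operatorname{Um}_n(R)$. An integer $n>0$ lies in the stable range of $R$ if every row in $\operatorname{Um}_{n+1}(R)$ is stable, and the Bass stable rank $\operatorname{sr}(R)$ is the least integer in the stable range of $R$. *)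

theory Defs
  imports "HOL-Algebra.QuotRing" "HOL-Library.Extended_Nat"
begin

text \<open>Rows of size n are functions r :: nat => 'a, using the entries r 0, ..., r (n-1).\<close>

definition row :: "('a,'b) ring_scheme \<Rightarrow> nat \<Rightarrow> (nat \<Rightarrow> 'a) \<Rightarrow> bool" where
  "row R n r \<longleftrightarrow> (\<forall>i<n. r i \<in> carrier R)"

definition unimodular :: "('a,'b) ring_scheme \<Rightarrow> nat \<Rightarrow> (nat \<Rightarrow> 'a) \<Rightarrow> bool" where
  "unimodular R n r \<longleftrightarrow> row R n r \<and>
     (\<exists>a. (\<forall>i<n. a i \<in> carrier R) \<and>
          finsum R (\<lambda>i. a i \<otimes>\<^bsub>R\<^esub> r i) {..<n} = \<one>\<^bsub>R\<^esub>)"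

definition stable_row :: "('a,'b) ring_scheme \<Rightarrow> nat \<Rightarrow> (nat \<Rightarrow> 'a) \<Rightarrow> bool" where
  "stable_row R n r \<longleftrightarrow> (\<exists>s. (\<forall>i<n. s i \<in> carrier R) \<and>
      unimodular R n (\<lambda>i. r i \<oplus>\<^bsub>R\<^esub> s i \<otimes>\<^bsub>R\<^esub> r n))"

definition in_stable_range :: "('a,'b) ring_scheme \<Rightarrow> nat \<Rightarrow> bool" where
  "in_stable_range R n \<longleftrightarrow> n > 0 \<and>
     (\<forall>r. unimodular R (Suc n) r \<longrightarrow> stable_row R n r)"

definition stable_rank :: "('a,'b) ring_scheme \<Rightarrow> enat" where
  "stable_rank R = (if \<exists>n. in_stable_range R n
                    then enat (LEAST n. in_stable_range R n) else \<infinity>)"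

definition jacobson :: "('a,'b) ring_scheme \<Rightarrow> 'a set" where
  "jacobson R = carrier R \<inter> \<Inter> {I. maximalideal I R}"

end

theory Submission
  imports Defs "HOL-Algebra.Ring_Divisibility"
begin

text \<open>Let \<open>(x, y, z)\<close> be unimodular and \<open>J\<close> the Jacobson radical. Since \<open>1 + J\<close> consists
  of units, a pair is unimodular as soon as it is unimodular modulo \<open>J\<close>. If \<open>y \<in> J\<close>, then
  \<open>(x, y + z)\<close> is unimodular modulo \<open>J\<close>. Otherwise the image of \<open>y\<close> generates a nonzero
  ideal \<open>K\<close> of \<open>R/J\<close>, so \<open>(R/J)/K\<close> has stable rank 1; as \<open>y\<close> vanishes there, \<open>(x, z)\<close>
  is unimodular in it, which gives \<open>s\<close> such that \<open>x + s z\<close> is invertible modulo \<open>J + R y\<close>,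
  i.e. \<open>(x + s z, y)\<close> is unimodular modulo \<open>J\<close>.\<close>

lemma (in abelian_monoid) finsum_lessThan_2:
  "f 0 \<in> carrier G \<Longrightarrow> f 1 \<in> carrier G \<Longrightarrow> finsum G f {..<2::nat} = f 0 \<oplus> f 1"
  by (simp add: numeral_2_eq_2 lessThan_Suc finsum_insert add.m_comm)

lemma (in abelian_monoid) finsum_lessThan_3:
  "f 0 \<in> carrier G \<Longrightarrow> f 1 \<in> carrier G \<Longrightarrow> f 2 \<in> carrier G \<Longrightarrow>
   finsum G f {..<3::nat} = f 0 \<oplus> f 1 \<oplus> f 2"
  by (simp add: numeral_3_eq_3 numeral_2_eq_2 lessThan_Suc finsum_insert add.m_comm add.m_lcomm)

lemma (in cring) unimodular_1_iff: "unimodular R 1 g \<longleftrightarrow> g 0 \<in> Units R"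
proof
  assume "unimodular R 1 g"
  then obtain a where "a 0 \<in> carrier R" "g 0 \<in> carrier R" "a 0 \<otimes> g 0 = \<one>"
    by (auto simp: unimodular_def row_def lessThan_Suc)
  then show "g 0 \<in> Units R" by (auto simp: Units_def m_comm)
next
  assume "g 0 \<in> Units R"
  then show "unimodular R 1 g"
    unfolding unimodular_def row_def
    by (intro conjI exI[of _ "\<lambda>_. inv (g 0)"]) (auto simp: lessThan_Suc)
qed

lemma (in cring) unimodular_2_iff:
  "unimodular R 2 g \<longleftrightarrow> g 0 \<in> carrier R \<and> g 1 \<in> carrier R \<and>
     (\<exists>a\<in>carrier R. \<exists>b\<in>carrier R. a \<otimes> g 0 \<oplus> b \<otimes> g 1 = \<one>)"
    (is "_ \<longleftrightarrow> ?rhs")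
proof
  assume "unimodular R 2 g"
  then obtain a where a: "\<forall>i<2. a i \<in> carrier R" and g: "\<forall>i<2. g i \<in> carrier R"
    and "finsum R (\<lambda>i. a i \<otimes> g i) {..<2} = \<one>"
    by (auto simp: unimodular_def row_def)
  moreover have "a 0 \<in> carrier R" "a 1 \<in> carrier R" "g 0 \<in> carrier R" "g 1 \<in> carrier R"
    using a g by simp_all
  moreover have "finsum R (\<lambda>i. a i \<otimes> g i) {..<2} = a 0 \<otimes> g 0 \<oplus> a 1 \<otimes> g 1"
    using calculation by (simp add: finsum_lessThan_2)
  ultimately show ?rhs by metis
next
  assume ?rhs
  then obtain a b where "g 0 \<in> carrier R" "g 1 \<in> carrier R" "a \<in> carrier R" "b \<in> carrier R"
    "a \<otimes> g 0 \<oplus> b \<otimes> g 1 = \<one>" by blast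
  then show "unimodular R 2 g"
    unfolding unimodular_def row_def
    by (intro conjI exI[of _ "\<lambda>i. if i = 0 then a else b"])
      (auto simp: finsum_lessThan_2 less_2_cases_iff)
qed

lemma (in cring) unimodular_3_iff:
  "unimodular R 3 g \<longleftrightarrow> g 0 \<in> carrier R \<and> g 1 \<in> carrier R \<and> g 2 \<in> carrier R \<and>
     (\<exists>a\<in>carrier R. \<exists>b\<in>carrier R. \<exists>c\<in>carrier R. a \<otimes> g 0 \<oplus> b \<otimes> g 1 \<oplus> c \<otimes> g 2 = \<one>)"
    (is "_ \<longleftrightarrow> ?rhs")
proof
  assume "unimodular R 3 g"
  then obtain a where a: "\<forall>i<3. a i \<in> carrier R" and g: "\<forall>i<3. g i \<in> carrier R"
    and "finsum R (\<lambda>i. a i \<otimes> g i) {..<3} = \<one>"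
    by (auto simp: unimodular_def row_def)
  moreover have "a 0 \<in> carrier R" "a 1 \<in> carrier R" "a 2 \<in> carrier R"
    "g 0 \<in> carrier R" "g 1 \<in> carrier R" "g 2 \<in> carrier R"
    using a g by simp_all
  moreover have "finsum R (\<lambda>i. a i \<otimes> g i) {..<3} = a 0 \<otimes> g 0 \<oplus> a 1 \<otimes> g 1 \<oplus> a 2 \<otimes> g 2"
    using calculation by (simp add: finsum_lessThan_3)
  ultimately show ?rhs by metis
next
  assume ?rhs
  then obtain a b c where "g 0 \<in> carrier R" "g 1 \<in> carrier R" "g 2 \<in> carrier R"
    "a \<in> carrier R" "b \<in> carrier R" "c \<in> carrier R"
    "a \<otimes> g 0 \<oplus> b \<otimes> g 1 \<oplus> c \<otimes> g 2 = \<one>" by blast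
  moreover have "i < 3 \<longleftrightarrow> i = 0 \<or> i = 1 \<or> i = 2" for i :: nat by auto
  ultimately show "unimodular R 3 g"
    unfolding unimodular_def row_def
    by (intro conjI exI[of _ "\<lambda>i. if i = 0 then a else if i = 1 then b else c"])
      (auto simp: finsum_lessThan_3)
qed

lemma in_stable_range_if_stable_rank_eq: "stable_rank R = enat n \<Longrightarrow> in_stable_range R n"
  unfolding stable_rank_def by (auto split: if_splits intro: LeastI_ex)

lemma stable_rank_le_if_in_stable_range: "in_stable_range R n \<Longrightarrow> stable_rank R \<le> enat n"
  unfolding stable_rank_def by (auto intro: Least_le)

lemma (in cring) in_stable_range_1D:
  assumes "in_stable_range R 1"
    and "x \<in> carrier R" "y \<in> carrier R" "a \<in> carrier R" "b \<in> carrier R"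
    and "a \<otimes> x \<oplus> b \<otimes> y = \<one>"
  obtains s where "s \<in> carrier R" "x \<oplus> s \<otimes> y \<in> Units R"
proof -
  let ?r = "\<lambda>i::nat. if i = 0 then x else y"
  have "unimodular R 2 ?r"
    using assms(2-) by (auto simp: unimodular_2_iff)
  then have "stable_row R 1 ?r"
    using assms(1) by (simp add: in_stable_range_def numeral_2_eq_2)
  then obtain s where "s 0 \<in> carrier R" "unimodular R 1 (\<lambda>i. ?r i \<oplus> s i \<otimes> ?r 1)"
    unfolding stable_row_def by blast
  then show thesis
    using that unfolding unimodular_1_iff by simp
qed

lemma (in cring) in_stable_range_2I:
  assumes "\<And>x y z a b c. \<lbrakk>x \<in> carrier R; y \<in> carrier R; z \<in> carrier R;
      a \<in> carrier R; b \<in> carrier R; c \<in> carrier R; a \<otimes> x \<oplus> b \<otimes> y \<oplus> c \<otimes> z = \<one>\<rbrakk> \<Longrightarrow>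
      \<exists>s\<in>carrier R. \<exists>t\<in>carrier R. \<exists>u\<in>carrier R. \<exists>v\<in>carrier R.
        u \<otimes> (x \<oplus> s \<otimes> z) \<oplus> v \<otimes> (y \<oplus> t \<otimes> z) = \<one>"
  shows "in_stable_range R 2"
  unfolding in_stable_range_def
proof (intro conjI allI impI)
  fix r assume "unimodular R (Suc 2) r"
  then have "unimodular R 3 r"
    by simp
  then obtain a b c where r: "r 0 \<in> carrier R" "r 1 \<in> carrier R" "r 2 \<in> carrier R"
    and abc: "a \<in> carrier R" "b \<in> carrier R" "c \<in> carrier R"
    and sum: "a \<otimes> r 0 \<oplus> b \<otimes> r 1 \<oplus> c \<otimes> r 2 = \<one>"
    unfolding unimodular_3_iff by blast
  from assms[OF r abc sum] obtain s t u v where st: "s \<in> carrier R" "t \<in> carrier R"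
    and "u \<in> carrier R" "v \<in> carrier R"
    and "u \<otimes> (r 0 \<oplus> s \<otimes> r 2) \<oplus> v \<otimes> (r 1 \<oplus> t \<otimes> r 2) = \<one>"
    by blast
  then have "unimodular R 2 (\<lambda>i. r i \<oplus> (if i = 0 then s else t) \<otimes> r 2)"
    using r unfolding unimodular_2_iff by auto
  moreover have "\<forall>i<2. (if i = 0 then s else t) \<in> carrier R"
    using st by simp
  ultimately show "stable_row R 2 r"
    unfolding stable_row_def by (intro exI[of _ "\<lambda>i. if i = 0 then s else t"] conjI)
qed simp

lemma (in ring) exists_maximalideal_superset:
  assumes "ideal I R" "\<one> \<notin> I"
  shows "\<exists>M. maximalideal M R \<and> I \<subseteq> M"
proof -
  define S where "S = {J. ideal J R \<and> I \<subseteq> J \<and> \<one> \<notin> J}"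
  have "\<exists>M\<in>S. \<forall>X\<in>S. M \<subseteq> X \<longrightarrow> X = M"
  proof (rule subset_Zorn)
    fix C assume C: "subset.chain S C"
    show "\<exists>U\<in>S. \<forall>X\<in>C. X \<subseteq> U"
    proof (cases "C = {}")
      case True
      then show ?thesis using assms by (auto simp: S_def)
    next
      case False
      have "subset.chain {J. ideal J R} C"
        using C unfolding pred_on.chain_def S_def by auto
      from chain_Union_is_ideal[OF this] have "ideal (\<Union>C) R"
        using False by simp
      moreover have "I \<subseteq> \<Union>C"
        using False C unfolding pred_on.chain_def S_def by blast
      moreover have "\<one> \<notin> \<Union>C"
        using C unfolding pred_on.chain_def S_def by auto
      ultimately show ?thesis
        unfolding S_def by auto
    qed
  qed
  then obtain M where M: "M \<in> S" and M_max: "\<And>X. X \<in> S \<Longrightarrow> M \<subseteq> X \<Longrightarrow> X = M"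
    by blast
  have "maximalideal M R"
  proof (rule maximalidealI)
    show "ideal M R" "carrier R \<noteq> M"
      using M by (auto simp: S_def)
    fix J assume J: "ideal J R" "M \<subseteq> J" "J \<subseteq> carrier R"
    show "J = M \<or> J = carrier R"
    proof (cases "\<one> \<in> J")
      case True
      then show ?thesis using ideal.one_imp_carrier[OF J(1)] by blast
    next
      case False
      then have "J \<in> S" using J M by (auto simp: S_def)
      then show ?thesis using M_max J by blast
    qed
  qed
  then show ?thesis using M by (auto simp: S_def)
qed

lemma (in ring) jacobson_ideal: "ideal (jacobson R) R"
  unfolding jacobson_def Inter_insert[symmetric]
  by (rule i_Intersect) (auto intro: oneideal maximalideal.axioms(1))

lemma (in cring) Units_if_minus_one_in_jacobson:
  assumes u: "u \<in> carrier R" and "u \<ominus> \<one> \<in> jacobson R"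
  shows "u \<in> Units R"
proof (rule ccontr)
  assume "u \<notin> Units R"
  then have "\<one> \<notin> PIdl u"
    using u m_comm by (auto simp: cgenideal_def Units_def)
  then obtain M where M: "maximalideal M R" "PIdl u \<subseteq> M"
    using exists_maximalideal_superset cgenideal_ideal[OF u] by blast
  interpret M: maximalideal M R by (rule M(1))
  have "u \<in> M" "u \<ominus> \<one> \<in> M"
    using M(2) cgenideal_self[OF u] assms(2) M(1) by (auto simp: jacobson_def)
  then have "u \<ominus> (u \<ominus> \<one>) \<in> M"
    by (simp add: a_minus_def M.a_closed M.a_inv_closed)
  moreover have "u \<ominus> (u \<ominus> \<one>) = \<one>"
    using u by algebra
  ultimately show False
    using M.one_imp_carrier M.I_notcarr by simp
qed

lemma (in cring) unimodular_pair_if_mod_jacobson: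
  assumes "x \<in> carrier R" "y \<in> carrier R" "u \<in> carrier R" "v \<in> carrier R"
    and "u \<otimes> x \<oplus> v \<otimes> y \<ominus> \<one> \<in> jacobson R"
  shows "\<exists>a\<in>carrier R. \<exists>b\<in>carrier R. a \<otimes> x \<oplus> b \<otimes> y = \<one>"
proof -
  let ?w = "u \<otimes> x \<oplus> v \<otimes> y"
  have w: "?w \<in> Units R"
    using assms by (intro Units_if_minus_one_in_jacobson) auto
  have "inv ?w \<otimes> u \<otimes> x \<oplus> inv ?w \<otimes> v \<otimes> y = inv ?w \<otimes> ?w"
    using assms w by (simp add: r_distr m_assoc)
  also have "\<dots> = \<one>"
    using w by simp
  finally have "inv ?w \<otimes> u \<otimes> x \<oplus> inv ?w \<otimes> v \<otimes> y = \<one>" .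
  moreover have "inv ?w \<otimes> u \<in> carrier R" "inv ?w \<otimes> v \<in> carrier R"
    using assms w by simp_all
  ultimately show ?thesis
    by blast
qed

lemma carrier_FactRing:
  fixes R (structure)
  shows "carrier (R Quot I) = (\<lambda>z. I +> z) ` carrier R"
  by (auto simp: FactRing_def A_RCOSETS_def')

lemma carrier_quotient_of_quotient:
  fixes R (structure)
  shows "carrier ((R Quot I) Quot K) = (\<lambda>z. K +>\<^bsub>R Quot I\<^esub> (I +> z)) ` carrier R"
  by (simp add: carrier_FactRing image_image)

lemma (in ring) quotient_of_quotient_hom:
  assumes "ideal I R" "ideal K (R Quot I)"
  shows "(\<lambda>z. K +>\<^bsub>R Quot I\<^esub> (I +> z)) \<in> ring_hom R ((R Quot I) Quot K)"
  using ring_hom_trans[OF ideal.rcos_ring_hom[OF assms(1)] ideal.rcos_ring_hom[OF assms(2)]]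
  by (simp add: comp_def)

lemma (in cring) quotient_of_quotient_eq_iff:
  assumes "ideal I R" "c \<in> carrier R" "x \<in> carrier R" "y \<in> carrier R"
  shows "PIdl\<^bsub>R Quot I\<^esub> (I +> c) +>\<^bsub>R Quot I\<^esub> (I +> x) =
           PIdl\<^bsub>R Quot I\<^esub> (I +> c) +>\<^bsub>R Quot I\<^esub> (I +> y)
    \<longleftrightarrow> (\<exists>q\<in>carrier R. x \<ominus> y \<ominus> q \<otimes> c \<in> I)"
proof -
  interpret I: ideal I R by fact
  interpret S: cring "R Quot I" by (rule I.quotient_is_cring[OF is_cring])
  interpret h: ring_hom_ring R "R Quot I" "(+>) I" by (rule I.rcos_ring_hom_ring)
  have "PIdl\<^bsub>R Quot I\<^esub> (I +> c) +>\<^bsub>R Quot I\<^esub> (I +> x) =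
          PIdl\<^bsub>R Quot I\<^esub> (I +> c) +>\<^bsub>R Quot I\<^esub> (I +> y)
    \<longleftrightarrow> (I +> x) \<ominus>\<^bsub>R Quot I\<^esub> (I +> y) \<in> PIdl\<^bsub>R Quot I\<^esub> (I +> c)"
    using assms by (simp add: S.quotient_eq_iff_same_a_r_cos S.cgenideal_ideal)
  also have "(I +> x) \<ominus>\<^bsub>R Quot I\<^esub> (I +> y) = I +> (x \<ominus> y)"
    using assms by (simp add: a_minus_def)
  also have "I +> (x \<ominus> y) \<in> PIdl\<^bsub>R Quot I\<^esub> (I +> c) \<longleftrightarrow>
      (\<exists>q\<in>carrier R. I +> (x \<ominus> y) = (I +> q) \<otimes>\<^bsub>R Quot I\<^esub> (I +> c))"
    by (auto simp: cgenideal_def carrier_FactRing)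
  also have "\<dots> \<longleftrightarrow> (\<exists>q\<in>carrier R. I +> (x \<ominus> y) = I +> (q \<otimes> c))"
    by (rule bex_cong) (simp_all add: assms(2))
  also have "\<dots> \<longleftrightarrow> (\<exists>q\<in>carrier R. x \<ominus> y \<ominus> q \<otimes> c \<in> I)"
    using assms by (simp add: quotient_eq_iff_same_a_r_cos)
  finally show ?thesis .
qed

lemma (in cring) stable_triple_if_jacobson:
  assumes "x \<in> carrier R" "y \<in> carrier R" "z \<in> carrier R"
    and "a \<in> carrier R" "b \<in> carrier R" "c \<in> carrier R"
    and "a \<otimes> x \<oplus> b \<otimes> y \<oplus> c \<otimes> z = \<one>" and "y \<in> jacobson R"
  shows "\<exists>u\<in>carrier R. \<exists>v\<in>carrier R. u \<otimes> x \<oplus> v \<otimes> (y \<oplus> z) = \<one>"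
proof (rule unimodular_pair_if_mod_jacobson)
  have "a \<otimes> x \<oplus> c \<otimes> (y \<oplus> z) \<ominus> (a \<otimes> x \<oplus> b \<otimes> y \<oplus> c \<otimes> z) = (c \<ominus> b) \<otimes> y"
    using assms(1-6) by algebra
  moreover have "(c \<ominus> b) \<otimes> y \<in> jacobson R"
    using assms by (simp add: ideal.I_l_closed[OF jacobson_ideal])
  ultimately show "a \<otimes> x \<oplus> c \<otimes> (y \<oplus> z) \<ominus> \<one> \<in> jacobson R"
    using assms(7) by simp
qed (use assms in auto)

lemma (in ring_hom_ring) in_stable_range_1_lift:
  assumes "cring S" "h ` carrier R = carrier S" "in_stable_range S 1"
    and "x \<in> carrier R" "y \<in> carrier R" "a \<in> carrier R" "b \<in> carrier R"
    and "h (a \<otimes> x \<oplus> b \<otimes> y) = \<one>\<^bsub>S\<^esub>"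
  obtains s u where "s \<in> carrier R" "u \<in> carrier R" "h (u \<otimes> (x \<oplus> s \<otimes> y)) = \<one>\<^bsub>S\<^esub>"
proof -
  interpret S: cring S by fact
  have "h a \<otimes>\<^bsub>S\<^esub> h x \<oplus>\<^bsub>S\<^esub> h b \<otimes>\<^bsub>S\<^esub> h y = \<one>\<^bsub>S\<^esub>"
    using assms(4-) by simp
  then obtain S' where S': "S' \<in> carrier S" "h x \<oplus>\<^bsub>S\<^esub> S' \<otimes>\<^bsub>S\<^esub> h y \<in> Units S"
    using S.in_stable_range_1D[OF assms(3) hom_closed[OF assms(4)] hom_closed[OF assms(5)]
        hom_closed[OF assms(6)] hom_closed[OF assms(7)]] by blast
  obtain s where s: "s \<in> carrier R" "S' = h s"
    using S' assms(2) by auto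
  obtain U' where U': "U' \<in> carrier S" "U' \<otimes>\<^bsub>S\<^esub> (h x \<oplus>\<^bsub>S\<^esub> S' \<otimes>\<^bsub>S\<^esub> h y) = \<one>\<^bsub>S\<^esub>"
    using S'(2) unfolding Units_def by blast
  obtain u where u: "u \<in> carrier R" "U' = h u"
    using U'(1) assms(2) by auto
  have "h (u \<otimes> (x \<oplus> s \<otimes> y)) = \<one>\<^bsub>S\<^esub>"
    using U'(2) assms(4,5) s u by simp
  with s u that show thesis
    by blast
qed

lemma (in cring) ideal_PIdl_quotient:
  assumes "ideal I R" "y \<in> carrier R"
  shows "ideal (PIdl\<^bsub>R Quot I\<^esub> (I +> y)) (R Quot I)"
proof -
  interpret S: cring "R Quot I"
    by (rule ideal.quotient_is_cring[OF assms(1) is_cring])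
  show ?thesis
    using assms(2) by (intro S.cgenideal_ideal) (simp add: carrier_FactRing)
qed

lemma (in ring) PIdl_quotient_nonzero:
  assumes "ideal I R" "y \<in> carrier R" "y \<notin> I"
  shows "PIdl\<^bsub>R Quot I\<^esub> (I +> y) \<noteq> {\<zero>\<^bsub>R Quot I\<^esub>}"
proof
  interpret S: ring "R Quot I"
    by (rule ideal.quotient_is_ring[OF assms(1)])
  assume "PIdl\<^bsub>R Quot I\<^esub> (I +> y) = {\<zero>\<^bsub>R Quot I\<^esub>}"
  moreover have "I +> y \<in> carrier (R Quot I)"
    using assms(2) by (simp add: carrier_FactRing)
  ultimately have "I +> y = I"
    using S.cgenideal_self[of "I +> y"] by (simp add: FactRing_def)
  then show False
    using ideal.rcos_const_imp_mem[OF assms(1,2)] assms(3) by blast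
qed

lemma (in cring) unit_mod_ideal_and_element_if_quotient_in_stable_range_1:
  assumes I: "ideal I R"
    and sr1: "in_stable_range ((R Quot I) Quot PIdl\<^bsub>R Quot I\<^esub> (I +> y)) 1"
    and "x \<in> carrier R" "y \<in> carrier R" "z \<in> carrier R"
    and "a \<in> carrier R" "b \<in> carrier R" "c \<in> carrier R"
    and sum: "a \<otimes> x \<oplus> b \<otimes> y \<oplus> c \<otimes> z = \<one>"
  obtains s u q where "s \<in> carrier R" "u \<in> carrier R" "q \<in> carrier R"
    "u \<otimes> (x \<oplus> s \<otimes> z) \<ominus> \<one> \<ominus> q \<otimes> y \<in> I"
proof -
  define K where "K = PIdl\<^bsub>R Quot I\<^esub> (I +> y)"
  define T where "T = (R Quot I) Quot K"
  define h where "h = (\<lambda>w. K +>\<^bsub>R Quot I\<^esub> (I +> w))"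
  interpret S: cring "R Quot I"
    by (rule ideal.quotient_is_cring[OF I is_cring])
  have K: "ideal K (R Quot I)"
    unfolding K_def using I assms(4) by (rule ideal_PIdl_quotient)
  interpret T: cring T
    unfolding T_def by (rule ideal.quotient_is_cring[OF K S.is_cring])
  interpret h: ring_hom_ring R T h
    unfolding T_def h_def
    by (intro ring_hom_ringI2 quotient_of_quotient_hom I K ring_axioms T.ring_axioms[unfolded T_def])
  have h_eq: "h w = h w' \<longleftrightarrow> (\<exists>q\<in>carrier R. w \<ominus> w' \<ominus> q \<otimes> y \<in> I)"
    if "w \<in> carrier R" "w' \<in> carrier R" for w w'
    unfolding h_def K_def using quotient_of_quotient_eq_iff[OF I assms(4) that] .
  have "y \<ominus> \<zero> \<ominus> \<one> \<otimes> y = \<zero>"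
    using assms(4) by algebra
  then have "h y = h \<zero>"
    using h_eq[of y \<zero>] assms(4) additive_subgroup.zero_closed[OF ideal.axioms(1)[OF I]]
    by (metis one_closed zero_closed)
  then have "h (a \<otimes> x \<oplus> c \<otimes> z) = h (a \<otimes> x \<oplus> b \<otimes> y \<oplus> c \<otimes> z)"
    using assms(3-8) by simp
  also have "\<dots> = \<one>\<^bsub>T\<^esub>"
    using sum by simp
  finally have "h (a \<otimes> x \<oplus> c \<otimes> z) = \<one>\<^bsub>T\<^esub>" .
  moreover have "h ` carrier R = carrier T"
    unfolding T_def h_def by (rule carrier_quotient_of_quotient[symmetric])
  moreover have "in_stable_range T 1"
    using sr1 unfolding T_def K_def .
  ultimately obtain s u where s: "s \<in> carrier R" and u: "u \<in> carrier R"
    and "h (u \<otimes> (x \<oplus> s \<otimes> z)) = \<one>\<^bsub>T\<^esub>"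
    using h.in_stable_range_1_lift[OF T.is_cring _ _ assms(3,5,6,8)] by blast
  then have "h (u \<otimes> (x \<oplus> s \<otimes> z)) = h \<one>"
    by simp
  then obtain q where "q \<in> carrier R" "u \<otimes> (x \<oplus> s \<otimes> z) \<ominus> \<one> \<ominus> q \<otimes> y \<in> I"
    by (subst (asm) h_eq) (use assms(3-5) s u in auto)
  with s u that show thesis
    by blast
qed

lemma (in cring) in_stable_range_2_if_quotients_stable_rank_1:
  assumes "\<forall>I. ideal I (R Quot jacobson R) \<and> I \<noteq> {\<zero>\<^bsub>R Quot jacobson R\<^esub>}
              \<longrightarrow> stable_rank ((R Quot jacobson R) Quot I) = 1"
  shows "in_stable_range R 2"
proof (rule in_stable_range_2I)
  fix x y z a b c
  assume carr: "x \<in> carrier R" "y \<in> carrier R" "z \<in> carrier R"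
    "a \<in> carrier R" "b \<in> carrier R" "c \<in> carrier R"
    and sum: "a \<otimes> x \<oplus> b \<otimes> y \<oplus> c \<otimes> z = \<one>"
  show "\<exists>s\<in>carrier R. \<exists>t\<in>carrier R. \<exists>u\<in>carrier R. \<exists>v\<in>carrier R.
          u \<otimes> (x \<oplus> s \<otimes> z) \<oplus> v \<otimes> (y \<oplus> t \<otimes> z) = \<one>"
  proof (cases "y \<in> jacobson R")
    case True
    then obtain u v where uv: "u \<in> carrier R" "v \<in> carrier R"
      and "u \<otimes> x \<oplus> v \<otimes> (y \<oplus> z) = \<one>"
      using stable_triple_if_jacobson[OF carr sum] by blast
    then have "u \<otimes> (x \<oplus> \<zero> \<otimes> z) \<oplus> v \<otimes> (y \<oplus> \<one> \<otimes> z) = \<one>"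
      using carr by simp
    then show ?thesis
      using uv zero_closed one_closed by blast
  next
    case False
    have J: "ideal (jacobson R) R"
      by (rule jacobson_ideal)
    have "stable_rank ((R Quot jacobson R) Quot PIdl\<^bsub>R Quot jacobson R\<^esub> (jacobson R +> y)) = enat 1"
      using assms ideal_PIdl_quotient[OF J carr(2)] PIdl_quotient_nonzero[OF J carr(2) False]
      by (simp add: one_enat_def)
    then obtain s u q where suq: "s \<in> carrier R" "u \<in> carrier R" "q \<in> carrier R"
      and "u \<otimes> (x \<oplus> s \<otimes> z) \<ominus> \<one> \<ominus> q \<otimes> y \<in> jacobson R"
      using unit_mod_ideal_and_element_if_quotient_in_stable_range_1[OF J
          in_stable_range_if_stable_rank_eq carr sum] by blast
    moreover have "u \<otimes> (x \<oplus> s \<otimes> z) \<oplus> (\<ominus> q) \<otimes> y \<ominus> \<one> = u \<otimes> (x \<oplus> s \<otimes> z) \<ominus> \<one> \<ominus> q \<otimes> y"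
      using carr suq by algebra
    ultimately obtain v w where vw: "v \<in> carrier R" "w \<in> carrier R"
      and "v \<otimes> (x \<oplus> s \<otimes> z) \<oplus> w \<otimes> y = \<one>"
      using carr unimodular_pair_if_mod_jacobson[of "x \<oplus> s \<otimes> z" y u "\<ominus> q"] by auto
    then have "v \<otimes> (x \<oplus> s \<otimes> z) \<oplus> w \<otimes> (y \<oplus> \<zero> \<otimes> z) = \<one>"
      using carr by simp
    then show ?thesis
      using suq vw zero_closed by blast
  qed
qed

theorem mainTheorem5:
  fixes R :: "('a, 'b) ring_scheme"
  assumes "cring R"
    and "\<forall>I. ideal I (R Quot jacobson R) \<and> I \<noteq> {\<zero>\<^bsub>R Quot jacobson R\<^esub>}
              \<longrightarrow> stable_rank ((R Quot jacobson R) Quot I) = 1"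
  shows "stable_rank R \<le> 2"
proof -
  interpret cring R by fact
  have "in_stable_range R 2"
    using assms(2) by (rule in_stable_range_2_if_quotients_stable_rank_1)
  then have "stable_rank R \<le> enat 2"
    by (rule stable_rank_le_if_in_stable_range)
  then show ?thesis
    by (simp add: numeral_eq_enat)
qed

end
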